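(* Let $t=(k_1,\dots,k_l)$ be a parameter tuple of length $l\in\mathbb{N}$, let $m\in\mathbb{N}_0$ and $s\in\mathbb{R}$ with $s>1$. Then $$\mathrm{grt}_{m+l}(\underbrace{2,\dots,2}_{m},k_1,\dots,k_l)\le\max\big(s\cdot m+1,\ \mathrm{cr}_{\mathrm{app}}(t,1-\tfrac1s)\big).$$
   Context: A parameter tuple is a non-decreasing tuple $(k_1,\dots,k_r)$ of integers $k_i\ge2$. An arithmetic progression of size $k$ is a $k$-element set $P\subset\mathbb{N}$ such that, in natural order, consecutive elements always have the same distance. Let $p_1<p_2<\dots$ be the prime numbers. For a parameter tuple $(k_1,\dots,k_r)$, the Green-Tao number $\mathrm{grt}_r(k_1,\dots,k_r)$ is the smallest $n_0\in\mathbb{N}$ such that for every $n\ge n_0$ and every $f:\{p_1,\dots,p_n\}\to\{1,\dots,r\}$ there is $i$ such that $f^{-1}(i)$ contains an arithmetic progression of size $k_i$. For $q>0$, $\mathrm{cr}_{\mathrm{app}}(t,q)\in\mathbb{N}\cup\{+\infty\}$ is the infimum of all $n\in\mathbb{N}$ such that for all $n'\ge n$ and all pairwise disjoint $S_1,\dots,S_l\subseteq\{p_1,\dots,p_{n'}\}$ with $S_i$ containing no arithmetic progression of size $k_i$, we have $\frac{|S_1|+\dots+|S_l|}{n'}<q$ (infimum of the empty set is $+\infty$). *)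

theory Defs
  imports Complex_Main "HOL-Library.Infinite_Set" "HOL-Library.Extended_Real"
    "HOL-Computational_Algebra.Primes"
begin

text \<open>The i-th prime (0-indexed): enumerate of the set of primes, so p_(i+1) = nth_prime i.\<close>
definition nth_prime :: "nat \<Rightarrow> nat" where
  "nth_prime i = enumerate {p::nat. prime p} i"

definition first_primes :: "nat \<Rightarrow> nat set" where
  "first_primes n = nth_prime ` {..<n}"

definition param_tuple :: "nat list \<Rightarrow> bool" where
  "param_tuple ks \<longleftrightarrow> sorted ks \<and> (\<forall>k\<in>set ks. 2 \<le> k)"

definition is_AP :: "nat \<Rightarrow> nat set \<Rightarrow> bool" where
  "is_AP k P \<longleftrightarrow> card P = k \<and> (\<exists>a d. P = {a + i * d | i. i < k})"

definition has_AP :: "nat \<Rightarrow> nat set \<Rightarrow> bool" where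
  "has_AP k S \<longleftrightarrow> (\<exists>P. P \<subseteq> S \<and> is_AP k P)"

text \<open>Green-Tao number of the tuple ks (r = length ks); colours are 1..r and
  colour i must avoid APs of size ks!(i-1). Infimum of the empty set is infinity.\<close>
definition grt :: "nat list \<Rightarrow> enat" where
  "grt ks = (INF n0 \<in> {n0::nat. \<forall>n\<ge>n0. \<forall>f::nat \<Rightarrow> nat.
      f ` first_primes n \<subseteq> {1..length ks} \<longrightarrow>
      (\<exists>i\<in>{1..length ks}. has_AP (ks ! (i - 1)) {p \<in> first_primes n. f p = i})}. enat n0)"

text \<open>cr_app(t,q), with S_1..S_l represented as S 0, ..., S (l-1).\<close>
definition cr_app :: "nat list \<Rightarrow> real \<Rightarrow> enat" where
  "cr_app ks q = (INF n \<in> {n::nat. 1 \<le> n \<and> (\<forall>n'\<ge>n. \<forall>S::nat \<Rightarrow> nat set.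
      ((\<forall>i<length ks. S i \<subseteq> first_primes n' \<and> \<not> has_AP (ks ! i) (S i)) \<and>
       (\<forall>i<length ks. \<forall>j<length ks. i \<noteq> j \<longrightarrow> S i \<inter> S j = {}))
      \<longrightarrow> real (\<Sum>i<length ks. card (S i)) / real n' < q)}. enat n)"

end

theory Submission
  imports Defs
begin

text \<open>The first \<open>m\<close> colours forbid 2-term progressions, so each of them is used at
  most once; the remaining \<open>l\<close> colour classes form an AP-free packing covering at least
  \<open>n - m\<close> primes. Once \<open>n \<ge> s m\<close> this is a proportion of at least \<open>1 - 1/s\<close>, which is
  impossible once \<open>n\<close> also exceeds \<open>cr_app(t, 1 - 1/s)\<close>.\<close>

definition AP_free_packing :: "nat list \<Rightarrow> nat \<Rightarrow> (nat \<Rightarrow> nat set) \<Rightarrow> bool" where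
  "AP_free_packing ks n S \<longleftrightarrow>
     (\<forall>i<length ks. S i \<subseteq> first_primes n \<and> \<not> has_AP (ks ! i) (S i)) \<and>
     (\<forall>i<length ks. \<forall>j<length ks. i \<noteq> j \<longrightarrow> S i \<inter> S j = {})"

lemma card_first_primes: "card (first_primes n) = n"
proof -
  have "strict_mono (enumerate {p::nat. prime p})"
    using strict_mono_enumerate primes_infinite by blast
  hence "inj nth_prime"
    unfolding nth_prime_def[abs_def] using strict_mono_imp_inj_on by blast
  thus ?thesis unfolding first_primes_def by (simp add: card_image inj_on_subset)
qed

lemma finite_first_primes: "finite (first_primes n)"
  unfolding first_primes_def by simp

lemma is_AP_2_pair:
  assumes "a < b"
  shows "is_AP 2 {a, b}"
proof -
  have "{a + i * (b - a) | i. i < (2::nat)} = (\<lambda>i. a + i * (b - a)) ` {..<2}"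
    by blast
  also have "\<dots> = {a, b}"
  proof -
    have "{..<2::nat} = {0, 1}" by auto
    thus ?thesis using assms by simp
  qed
  finally have "{a, b} = {a + i * (b - a) | i. i < (2::nat)}" ..
  moreover have "card {a, b} = 2" using assms by simp
  ultimately show ?thesis unfolding is_AP_def by blast
qed

lemma card_le_1_if_not_has_AP_2:
  assumes "\<not> has_AP 2 A" and "finite A"
  shows "card A \<le> 1"
proof (rule ccontr)
  assume "\<not> card A \<le> 1"
  then obtain x y where "x \<in> A" "y \<in> A" "x \<noteq> y"
    using card_le_Suc0_iff_eq[OF assms(2)] by auto
  then obtain a b where "a \<in> A" "b \<in> A" "a < b"
    by (meson linorder_neqE_nat)
  hence "{a, b} \<subseteq> A" and "is_AP 2 {a, b}" by (simp_all add: is_AP_2_pair)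
  with assms(1) show False unfolding has_AP_def by blast
qed

lemma cr_app_attained:
  assumes "cr_app ks q \<noteq> \<infinity>"
  obtains N where "cr_app ks q = enat N" and "1 \<le> N"
    and "\<And>n S. N \<le> n \<Longrightarrow> AP_free_packing ks n S \<Longrightarrow>
           real (\<Sum>i<length ks. card (S i)) / real n < q"
proof -
  define A where "A = {n::nat. 1 \<le> n \<and> (\<forall>n'\<ge>n. \<forall>S. AP_free_packing ks n' S \<longrightarrow>
      real (\<Sum>i<length ks. card (S i)) / real n' < q)}"
  have cr: "cr_app ks q = (INF n \<in> A. enat n)"
    unfolding cr_app_def A_def AP_free_packing_def ..
  hence "A \<noteq> {}" using assms by (auto simp: top_enat_def)
  hence "(LEAST n. n \<in> A) \<in> A" by (meson LeastI ex_in_conv)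
  moreover have "cr_app ks q = enat (LEAST n. n \<in> A)"
    unfolding cr using \<open>(LEAST n. n \<in> A) \<in> A\<close>
    by (intro antisym INF_lower INF_greatest) (auto intro: Least_le)
  ultimately show ?thesis using that unfolding A_def by blast
qed

lemma grt_le_enat:
  assumes "\<And>n f. n0 \<le> n \<Longrightarrow> f ` first_primes n \<subseteq> {1..length ks} \<Longrightarrow>
             \<exists>i\<in>{1..length ks}. has_AP (ks ! (i - 1)) {p \<in> first_primes n. f p = i}"
  shows "grt ks \<le> enat n0"
  unfolding grt_def by (rule INF_lower) (use assms in blast)

lemma card_le_sum_colour_classes:
  assumes "f ` first_primes n \<subseteq> {1..m + l}"
    and "\<And>i. i \<in> {1..m} \<Longrightarrow> card {p \<in> first_primes n. f p = i} \<le> 1"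
  shows "n \<le> m + (\<Sum>j<l. card {p \<in> first_primes n. f p = m + 1 + j})"
proof -
  let ?C = "\<lambda>i. {p \<in> first_primes n. f p = i}"
  let ?low = "\<Union>i\<in>{1..m}. ?C i" and ?high = "\<Union>j<l. ?C (m + 1 + j)"
  have "first_primes n \<subseteq> ?low \<union> ?high"
  proof
    fix p assume p: "p \<in> first_primes n"
    hence fp: "f p \<in> {1..m + l}" using assms(1) by blast
    show "p \<in> ?low \<union> ?high"
    proof (cases "f p \<le> m")
      case True
      hence "p \<in> ?C (f p)" and "f p \<in> {1..m}" using p fp by simp_all
      thus ?thesis by blast
    next
      case False
      hence "f p - m - 1 < l" and "p \<in> ?C (m + 1 + (f p - m - 1))" using p fp by simp_all
      thus ?thesis by blast
    qed
  qed
  moreover have "?low \<union> ?high \<subseteq> first_primes n" by blast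
  ultimately have "first_primes n = ?low \<union> ?high" by (rule subset_antisym)
  hence "n = card (?low \<union> ?high)" using card_first_primes[of n] by simp
  also have "\<dots> \<le> card ?low + card ?high"
    by (rule card_Un_le)
  finally have "n \<le> card ?low + card ?high" .
  moreover have "card ?low \<le> m"
  proof -
    have "card ?low \<le> (\<Sum>i\<in>{1..m}. card (?C i))" by (rule card_UN_le) simp
    also have "\<dots> \<le> (\<Sum>i\<in>{1..m}. 1)" by (rule sum_mono) (rule assms(2))
    finally show ?thesis by simp
  qed
  moreover have "card ?high \<le> (\<Sum>j<l. card (?C (m + 1 + j)))" by (rule card_UN_le) simp
  ultimately show ?thesis by linarith
qed

lemma grt_replicate_2_append_le:
  assumes "1 \<le> N" and "s > 1"
    and packing_bound: "\<And>n S. N \<le> n \<Longrightarrow> AP_free_packing ks n S \<Longrightarrow>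
           real (\<Sum>i<length ks. card (S i)) / real n < 1 - 1 / s"
  shows "grt (replicate m 2 @ ks) \<le> enat (max N (nat \<lceil>s * real m\<rceil>))"
proof (rule grt_le_enat, rule ccontr)
  let ?ks = "replicate m 2 @ ks"
  fix n f
  assume n: "max N (nat \<lceil>s * real m\<rceil>) \<le> n"
    and f: "f ` first_primes n \<subseteq> {1..length ?ks}"
    and no_AP: "\<not> (\<exists>i\<in>{1..length ?ks}. has_AP (?ks ! (i - 1)) {p \<in> first_primes n. f p = i})"
  define S where "S j = {p \<in> first_primes n. f p = m + 1 + j}" for j
  have "AP_free_packing ks n S"
    unfolding AP_free_packing_def
  proof (intro conjI allI impI)
    fix i assume "i < length ks"
    hence "m + 1 + i \<in> {1..length ?ks}" and "?ks ! (m + 1 + i - 1) = ks ! i"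
      by (simp_all add: nth_append)
    thus "\<not> has_AP (ks ! i) (S i)" using no_AP unfolding S_def by metis
  qed (auto simp: S_def)
  have "n \<le> m + (\<Sum>j<length ks. card (S j))"
    unfolding S_def
  proof (rule card_le_sum_colour_classes)
    show "f ` first_primes n \<subseteq> {1..m + length ks}" using f by simp
  next
    fix i assume i: "i \<in> {1..m}"
    hence "i \<in> {1..length ?ks}" and "?ks ! (i - 1) = 2" by (auto simp: nth_append)
    hence "\<not> has_AP 2 {p \<in> first_primes n. f p = i}" using no_AP by metis
    thus "card {p \<in> first_primes n. f p = i} \<le> 1"
      by (rule card_le_1_if_not_has_AP_2) (simp add: finite_first_primes)
  qed
  hence "real n - real m \<le> real (\<Sum>j<length ks. card (S j))" by linarith
  moreover have "real n * (1 - 1 / s) \<le> real n - real m"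
  proof -
    have "s * real m \<le> real n" using n by linarith
    hence "real m \<le> real n / s" using \<open>s > 1\<close> by (simp add: field_simps)
    thus ?thesis by (simp add: algebra_simps)
  qed
  moreover have "real n > 0" using n assms(1) by simp
  ultimately have "1 - 1 / s \<le> real (\<Sum>j<length ks. card (S j)) / real n"
    by (simp add: field_simps)
  moreover have "N \<le> n" using n by simp
  ultimately show False using packing_bound[OF _ \<open>AP_free_packing ks n S\<close>] by fastforce
qed

theorem corollary2:
  fixes ks :: "nat list" and m :: nat and s :: real
  assumes "param_tuple ks" and "length ks \<ge> 1" and "s > 1"
  shows "ereal_of_enat (grt (replicate m 2 @ ks))
           \<le> max (ereal (s * real m + 1)) (ereal_of_enat (cr_app ks (1 - 1 / s)))"
proof (cases "cr_app ks (1 - 1 / s) = \<infinity>")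
  case False
  then obtain N where N: "cr_app ks (1 - 1 / s) = enat N" "1 \<le> N"
    and packing_bound: "\<And>n S. N \<le> n \<Longrightarrow> AP_free_packing ks n S \<Longrightarrow>
           real (\<Sum>i<length ks. card (S i)) / real n < 1 - 1 / s"
    using cr_app_attained by blast
  let ?n0 = "max N (nat \<lceil>s * real m\<rceil>)"
  have "ereal_of_enat (grt (replicate m 2 @ ks)) \<le> ereal (real ?n0)"
    using grt_replicate_2_append_le[OF N(2) assms(3) packing_bound]
    by (metis ereal_of_enat_le_iff ereal_of_enat_simps(1))
  also have "\<dots> \<le> max (ereal (s * real m + 1)) (ereal (real N))"
  proof -
    have "0 \<le> s * real m" using assms(3) by simp
    hence "0 \<le> \<lceil>s * real m\<rceil>" by simp
    hence "real (nat \<lceil>s * real m\<rceil>) = of_int \<lceil>s * real m\<rceil>" by simp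
    hence "real (nat \<lceil>s * real m\<rceil>) \<le> s * real m + 1" by linarith
    thus ?thesis by (auto simp: max_def)
  qed
  finally show ?thesis using N(1) by simp
qed simp

end
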